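(* Let $\mathcal D$ be universal with at least two blocks, $\mathcal B$ the block containing $\min(\mathcal D\setminus\{0\})$, $\mathbf m=\max\mathcal B$, $\mathrm M=(M,d)\in\mathfrak U_{\mathcal D}$, and $\sim$ the equivalence relation $x\sim y\iff d(x,y)\le\mathbf m$. Let $\mathrm M/\!\sim$ be the set of $\sim$-classes with the metric $d_{\min}(A,B)=\min\{d(a,b):a\in A,b\in B\}$, and let $\mathcal D_{\min}$ be its set of distances. Then $\mathcal D_{\min}$ is universal and $\mathrm M/\!\sim\ \in\mathfrak U_{\mathcal D_{\min}}$. Moreover, if $N$ is the point set of a copy of $\mathrm M/\!\sim$ in $\mathrm M/\!\sim$, then the subspace of $\mathrm M$ on $\bigcup N$ (the union of the classes belonging to $N$) is a copy of $\mathrm M$ in $\mathrm M$.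
   Context: $\mathcal D$ is a finite subset of $\mathbb R_{\ge0}$ containing $0$. $\mathfrak U_{\mathcal D}$ is the class of countable homogeneous metric spaces (every isometry between finite subspaces extends to an isometry of the space onto itself) with distance set exactly $\mathcal D$ into which every finite metric space with distances in $\mathcal D$ embeds isometrically; $\mathcal D$ is universal if this class is nonempty. A copy of a space in itself is the image of an isometric embedding of the space into itself. For $r\in\mathcal D$ with $r<\max\mathcal D$, $r^{+}$ is the smallest element of $\mathcal D$ larger than $r$; for $r>0$, $r^{-}$ is the largest element of $\mathcal D$ smaller than $r$. A block of $\mathcal D$ is a nonempty set $\mathcal B=\{b_0<b_1<\dots<b_n\}\subseteq\mathcal D\setminus\{0\}$ such that $b_0>2b_0^{-}$, $b_{i+1}=b_i^{+}$ for all $i<n$, and $b_i+b_0\ge b_{i+1}$ for all $i<n$; for universal $\mathcal D$ the blocks partition $\mathcal D\setminus\{0\}$. *)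

theory Defs
  imports Complex_Main "HOL-Library.Countable_Set"
begin

definition metric_on :: "'a set \<Rightarrow> ('a \<Rightarrow> 'a \<Rightarrow> real) \<Rightarrow> bool" where
  "metric_on M d \<longleftrightarrow>
     (\<forall>x\<in>M. \<forall>y\<in>M. d x y \<ge> 0 \<and> (d x y = 0 \<longleftrightarrow> x = y) \<and> d x y = d y x) \<and>
     (\<forall>x\<in>M. \<forall>y\<in>M. \<forall>z\<in>M. d x z \<le> d x y + d y z)"

definition dist_set :: "'a set \<Rightarrow> ('a \<Rightarrow> 'a \<Rightarrow> real) \<Rightarrow> real set" where
  "dist_set M d = {d x y | x y. x \<in> M \<and> y \<in> M}"

definition iso_emb :: "'a set \<Rightarrow> ('a \<Rightarrow> 'a \<Rightarrow> real) \<Rightarrow> 'b set \<Rightarrow> ('b \<Rightarrow> 'b \<Rightarrow> real) \<Rightarrow> ('a \<Rightarrow> 'b) \<Rightarrow> bool" where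
  "iso_emb A dA B dB f \<longleftrightarrow> f ` A \<subseteq> B \<and> (\<forall>x\<in>A. \<forall>y\<in>A. dB (f x) (f y) = dA x y)"

definition homogeneous :: "'a set \<Rightarrow> ('a \<Rightarrow> 'a \<Rightarrow> real) \<Rightarrow> bool" where
  "homogeneous M d \<longleftrightarrow>
     (\<forall>F f. F \<subseteq> M \<and> finite F \<and> iso_emb F d M d f \<longrightarrow>
        (\<exists>g. bij_betw g M M \<and> iso_emb M d M d g \<and> (\<forall>x\<in>F. g x = f x)))"

text \<open>Every finite metric space with distances in D embeds isometrically. Finite metric
  spaces are represented (up to isometry) on finite subsets of nat.\<close>
definition embeds_all_finite :: "real set \<Rightarrow> 'a set \<Rightarrow> ('a \<Rightarrow> 'a \<Rightarrow> real) \<Rightarrow> bool" where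
  "embeds_all_finite D M d \<longleftrightarrow>
     (\<forall>(F::nat set) dF. finite F \<and> metric_on F dF \<and> dist_set F dF \<subseteq> D \<longrightarrow>
        (\<exists>f. iso_emb F dF M d f))"

definition in_U :: "real set \<Rightarrow> 'a set \<Rightarrow> ('a \<Rightarrow> 'a \<Rightarrow> real) \<Rightarrow> bool" where
  "in_U D M d \<longleftrightarrow> countable M \<and> metric_on M d \<and> dist_set M d = D \<and>
     homogeneous M d \<and> embeds_all_finite D M d"

text \<open>D is universal iff U_D is nonempty (countable spaces can be taken on subsets of nat).\<close>
definition universal_dist :: "real set \<Rightarrow> bool" where
  "universal_dist D \<longleftrightarrow> (\<exists>(M::nat set) d. in_U D M d)"

definition succD :: "real set \<Rightarrow> real \<Rightarrow> real" where
  "succD D r = Min {s\<in>D. s > r}"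

definition predD :: "real set \<Rightarrow> real \<Rightarrow> real" where
  "predD D r = Max {s\<in>D. s < r}"

definition pre_block :: "real set \<Rightarrow> real set \<Rightarrow> bool" where
  "pre_block D B \<longleftrightarrow> B \<noteq> {} \<and> B \<subseteq> D - {0} \<and>
     Min B > 2 * predD D (Min B) \<and>
     (\<forall>b\<in>B. b < Max B \<longrightarrow> succD D b \<in> B \<and> b + Min B \<ge> succD D b)"

text \<open>Blocks are the maximal such sets (so that they partition D - {0}).\<close>
definition blocks :: "real set \<Rightarrow> real set set" where
  "blocks D = {B. pre_block D B \<and> (\<forall>B'. pre_block D B' \<and> B \<subseteq> B' \<longrightarrow> B' = B)}"

definition close_rel :: "'a set \<Rightarrow> ('a \<Rightarrow> 'a \<Rightarrow> real) \<Rightarrow> real \<Rightarrow> ('a \<times> 'a) set" where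
  "close_rel M d m = {(x, y). x \<in> M \<and> y \<in> M \<and> d x y \<le> m}"

definition dmin :: "('a \<Rightarrow> 'a \<Rightarrow> real) \<Rightarrow> 'a set \<Rightarrow> 'a set \<Rightarrow> real" where
  "dmin d A B = Min {d a b | a b. a \<in> A \<and> b \<in> B}"

end

theory Submission
  imports Defs
begin

(* After elementary facts on metrics we introduce admissible one-point types and
   the extension property, and show that every space of U_D has it (universality provides the
   one-point extension, homogeneity moves it into place).

   Let m = Max B for a block B.  Maximality of B together with the extension
   property excludes distances in (m, 2m], so d x y <= m is an equivalence relation.  A point
   with a prescribed type can be placed in any class whose class distances are compatible
   with the type; consequently dmin is attained from every point of a class, the quotient is
   a metric space, finite sets of classes have representatives realising dmin, partial
   isometries between classes lift to automorphisms of M (homogeneity of the quotient), and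
   finite spaces embed into the quotient through M (universality).  Finally the union of the
   classes of a copy of the quotient has the extension property, so back and forth makes it
   the point set of a copy of M. *)

lemma metric_on_nonneg: "metric_on M d \<Longrightarrow> x \<in> M \<Longrightarrow> y \<in> M \<Longrightarrow> d x y \<ge> 0"
  by (simp add: metric_on_def)

lemma metric_on_zero_iff: "metric_on M d \<Longrightarrow> x \<in> M \<Longrightarrow> y \<in> M \<Longrightarrow> d x y = 0 \<longleftrightarrow> x = y"
  by (simp add: metric_on_def)

lemma metric_on_self: "metric_on M d \<Longrightarrow> x \<in> M \<Longrightarrow> d x x = 0"
  by (simp add: metric_on_def)

lemma metric_on_sym: "metric_on M d \<Longrightarrow> x \<in> M \<Longrightarrow> y \<in> M \<Longrightarrow> d x y = d y x"
  by (simp add: metric_on_def)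

lemma metric_on_triangle:
  "metric_on M d \<Longrightarrow> x \<in> M \<Longrightarrow> y \<in> M \<Longrightarrow> z \<in> M \<Longrightarrow> d x z \<le> d x y + d y z"
  by (simp add: metric_on_def)

lemma metric_on_subset: "metric_on M d \<Longrightarrow> S \<subseteq> M \<Longrightarrow> metric_on S d"
  unfolding metric_on_def by blast

lemma dist_set_mono: "S \<subseteq> M \<Longrightarrow> dist_set S d \<subseteq> dist_set M d"
  unfolding dist_set_def by blast

lemma iso_emb_inj_on:
  assumes "metric_on A dA" "metric_on B dB" "iso_emb A dA B dB f"
  shows "inj_on f A"
proof (rule inj_onI)
  fix x y assume x: "x \<in> A" and y: "y \<in> A" and "f x = f y"
  then have "dA x y = dB (f x) (f y)" using assms(3) x y unfolding iso_emb_def by metis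
  also have "\<dots> = dB (f y) (f y)" using \<open>f x = f y\<close> by simp
  also have "\<dots> = 0" using assms y by (auto simp: iso_emb_def metric_on_def)
  finally show "x = y" using assms(1) x y by (simp add: metric_on_def)
qed

section \<open>One-point extensions and the extension property\<close>

text \<open>A function t on a finite set F is an admissible one-point extension type (with
  distances in D) if prescribing the distances t x from a new point to each x in F is
  compatible with the triangle inequality.\<close>
definition admissible :: "real set \<Rightarrow> ('a \<Rightarrow> 'a \<Rightarrow> real) \<Rightarrow> 'a set \<Rightarrow> ('a \<Rightarrow> real) \<Rightarrow> bool" where
  "admissible D d F t \<longleftrightarrow> (\<forall>x\<in>F. t x \<in> D \<and> t x > 0) \<and>
     (\<forall>x\<in>F. \<forall>y\<in>F. \<bar>t x - t y\<bar> \<le> d x y \<and> d x y \<le> t x + t y)"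

definition extension_property :: "real set \<Rightarrow> 'a set \<Rightarrow> ('a \<Rightarrow> 'a \<Rightarrow> real) \<Rightarrow> bool" where
  "extension_property D A d \<longleftrightarrow> (\<forall>F t. finite F \<and> F \<subseteq> A \<and> admissible D d F t \<longrightarrow>
     (\<exists>p\<in>A. p \<notin> F \<and> (\<forall>x\<in>F. d p x = t x)))"

lemma extension_propertyD:
  assumes "extension_property D A d" "finite F" "F \<subseteq> A" "admissible D d F t"
  shows "\<exists>p\<in>A. p \<notin> F \<and> (\<forall>x\<in>F. d p x = t x)"
  using assms unfolding extension_property_def by simp

lemma admissible_insert:
  assumes t: "admissible D d F t" and s: "s \<in> D" "s > 0" and ww: "d w w = 0"
    and sym: "\<And>x. x \<in> F \<Longrightarrow> d x w = d w x"
    and window: "\<And>x. x \<in> F \<Longrightarrow> \<bar>s - t x\<bar> \<le> d w x \<and> d w x \<le> s + t x"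
  shows "admissible D d (insert w F) (t(w := s))"
proof -
  have old: "\<bar>t x - t y\<bar> \<le> d x y \<and> d x y \<le> t x + t y" if "x \<in> F" "y \<in> F" for x y
    using t that by (simp add: admissible_def)
  have pair: "\<bar>(t(w := s)) x - (t(w := s)) y\<bar> \<le> d x y \<and> d x y \<le> (t(w := s)) x + (t(w := s)) y"
    if "x \<in> insert w F" "y \<in> insert w F" for x y
  proof (cases "x = w"; cases "y = w")
    assume "x \<noteq> w" "y \<noteq> w"
    then show ?thesis using old that by simp
  next
    assume "x = w" "y \<noteq> w"
    then show ?thesis using window[of y] that by simp
  next
    assume "x \<noteq> w" "y = w"
    then show ?thesis using window[of x] sym[of x] that by (simp add: abs_minus_commute add.commute)
  qed (use ww s in simp)
  moreover have "(t(w := s)) x \<in> D \<and> (t(w := s)) x > 0" if "x \<in> insert w F" for x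
    using t s that by (cases "x = w") (auto simp: admissible_def)
  ultimately show ?thesis unfolding admissible_def by (intro conjI ballI) fast+
qed

lemma admissible_singleton:
  "t x \<in> D \<Longrightarrow> t x > 0 \<Longrightarrow> d x x = 0 \<Longrightarrow> admissible D d {x} t"
  by (simp add: admissible_def)

lemma admissible_pair:
  assumes "t x \<in> D" "t y \<in> D" "t x > 0" "t y > 0" "d x x = 0" "d y y = 0" "d y x = d x y"
    and "\<bar>t x - t y\<bar> \<le> d x y" "d x y \<le> t x + t y"
  shows "admissible D d {x, y} t"
  using assms unfolding admissible_def by (auto simp: abs_minus_commute add.commute)

locale U_space =
  fixes D :: "real set" and M :: "'a set" and d :: "'a \<Rightarrow> 'a \<Rightarrow> real"
  assumes in_U: "in_U D M d" and finite_D: "finite D" and zero_D: "0 \<in> D"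
begin

lemma metric: "metric_on M d" and dist_set_eq: "dist_set M d = D"
  and homogeneous: "homogeneous M d" and embeds: "embeds_all_finite D M d"
  and countable: "countable M"
  using in_U by (simp_all add: in_U_def)

lemma d_nonneg: "x \<in> M \<Longrightarrow> y \<in> M \<Longrightarrow> d x y \<ge> 0"
  using metric by (rule metric_on_nonneg)

lemma d_zero_iff: "x \<in> M \<Longrightarrow> y \<in> M \<Longrightarrow> d x y = 0 \<longleftrightarrow> x = y"
  using metric by (rule metric_on_zero_iff)

lemma d_self: "x \<in> M \<Longrightarrow> d x x = 0"
  using metric by (rule metric_on_self)

lemma d_sym: "x \<in> M \<Longrightarrow> y \<in> M \<Longrightarrow> d x y = d y x"
  using metric by (rule metric_on_sym)

lemma d_triangle: "x \<in> M \<Longrightarrow> y \<in> M \<Longrightarrow> z \<in> M \<Longrightarrow> d x z \<le> d x y + d y z"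
  using metric by (rule metric_on_triangle)

lemma d_in_D: "x \<in> M \<Longrightarrow> y \<in> M \<Longrightarrow> d x y \<in> D"
  using dist_set_eq by (auto simp: dist_set_def)

lemma nonempty: "M \<noteq> {}"
  using zero_D dist_set_eq by (auto simp: dist_set_def)

text \<open>Universality and homogeneity combine: an embedding of part of a finite space
  extends to an embedding of the whole space.\<close>
lemma extend_embedding:
  fixes K K0 :: "nat set"
  assumes K: "finite K" "metric_on K dK" "dist_set K dK \<subseteq> D"
    and K0: "K0 \<subseteq> K" and \<psi>: "iso_emb K0 dK M d \<psi>"
  obtains \<phi> where "iso_emb K dK M d \<phi>" "\<And>i. i \<in> K0 \<Longrightarrow> \<phi> i = \<psi> i"
proof -
  obtain \<phi>0 where \<phi>0: "iso_emb K dK M d \<phi>0"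
    using embeds K unfolding embeds_all_finite_def by blast
  have inj: "inj_on \<phi>0 K" using iso_emb_inj_on[OF K(2) metric \<phi>0] .
  have \<phi>0M: "\<phi>0 ` K \<subseteq> M" using \<phi>0 by (simp add: iso_emb_def)
  define f where "f y = \<psi> (inv_into K \<phi>0 y)" for y
  have f\<phi>0: "f (\<phi>0 i) = \<psi> i" if "i \<in> K" for i
    using inj that by (simp add: f_def inv_into_f_f)
  have "iso_emb (\<phi>0 ` K0) d M d f"
    unfolding iso_emb_def
  proof (intro conjI ballI)
    show "f ` \<phi>0 ` K0 \<subseteq> M" using \<psi> K0 f\<phi>0 by (auto simp: iso_emb_def)
  next
    fix x y assume "x \<in> \<phi>0 ` K0" "y \<in> \<phi>0 ` K0"
    then obtain i j where ij: "i \<in> K0" "j \<in> K0" "x = \<phi>0 i" "y = \<phi>0 j" by blast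
    then have "d (f x) (f y) = d (\<psi> i) (\<psi> j)" using f\<phi>0 K0 by (auto simp: subset_iff)
    also have "\<dots> = dK i j" using \<psi> ij by (simp add: iso_emb_def)
    also have "\<dots> = d x y" using \<phi>0 ij K0 by (auto simp: iso_emb_def subset_iff)
    finally show "d (f x) (f y) = d x y" .
  qed
  moreover have "\<phi>0 ` K0 \<subseteq> M" "finite (\<phi>0 ` K0)"
    using \<phi>0M K0 finite_subset[OF K0 K(1)] by auto
  ultimately obtain g where g: "iso_emb M d M d g" "\<And>y. y \<in> \<phi>0 ` K0 \<Longrightarrow> g y = f y"
    using homogeneous[unfolded homogeneous_def, rule_format, of "\<phi>0 ` K0" f] by blast
  show ?thesis
  proof
    show "iso_emb K dK M d (g \<circ> \<phi>0)"
      unfolding iso_emb_def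
    proof (intro conjI ballI)
      show "(g \<circ> \<phi>0) ` K \<subseteq> M" using g(1) \<phi>0M by (auto simp: iso_emb_def)
    next
      fix i j assume "i \<in> K" "j \<in> K"
      then have "d (g (\<phi>0 i)) (g (\<phi>0 j)) = d (\<phi>0 i) (\<phi>0 j)" using g(1) \<phi>0M by (auto simp: iso_emb_def image_subset_iff)
      also have "\<dots> = dK i j" using \<phi>0 \<open>i \<in> K\<close> \<open>j \<in> K\<close> by (auto simp: iso_emb_def)
      finally show "d ((g \<circ> \<phi>0) i) ((g \<circ> \<phi>0) j) = dK i j" by simp
    qed
    show "(g \<circ> \<phi>0) i = \<psi> i" if "i \<in> K0" for i
      using g(2) f\<phi>0 K0 that by auto
  qed
qed

text \<open>The finite space obtained from F = e ` {0..<k} by adding a new point k at the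
  distances prescribed by an admissible type t, indexed by {0..k}.\<close>
definition one_point_dist :: "nat \<Rightarrow> (nat \<Rightarrow> 'a) \<Rightarrow> ('a \<Rightarrow> real) \<Rightarrow> nat \<Rightarrow> nat \<Rightarrow> real" where
  "one_point_dist k e t i j =
     (if i = k \<and> j = k then 0 else if i = k then t (e j) else if j = k then t (e i)
      else d (e i) (e j))"

lemma one_point_metric:
  assumes e: "inj_on e {0..<k}" "e ` {0..<k} \<subseteq> M" and t: "admissible D d (e ` {0..<k}) t"
  shows "metric_on {0..k} (one_point_dist k e t)" "dist_set {0..k} (one_point_dist k e t) \<subseteq> D"
proof -
  let ?\<delta> = "one_point_dist k e t"
  have eM: "i < k \<Longrightarrow> e i \<in> M" for i using e(2) by auto
  have tD: "i < k \<Longrightarrow> t (e i) \<in> D" and tpos: "i < k \<Longrightarrow> t (e i) > 0" for i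
    using t by (auto simp: admissible_def)
  have tt: "i < k \<Longrightarrow> j < k \<Longrightarrow> \<bar>t (e i) - t (e j)\<bar> \<le> d (e i) (e j) \<and> d (e i) (e j) \<le> t (e i) + t (e j)"
    for i j using t by (auto simp: admissible_def)
  have inK: "i \<in> {0..k} \<longleftrightarrow> i < k \<or> i = k" for i by auto
  have einj: "i < k \<Longrightarrow> j < k \<Longrightarrow> e i = e j \<longleftrightarrow> i = j" for i j
    using e(1) by (auto simp: inj_on_def)
  show "metric_on {0..k} ?\<delta>"
    unfolding metric_on_def
  proof (intro conjI ballI)
    fix i j assume ij: "i \<in> {0..k}" "j \<in> {0..k}"
    show "?\<delta> i j \<ge> 0"
      using ij tpos d_nonneg eM unfolding inK one_point_dist_def by (auto simp: less_imp_le)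
    show "?\<delta> i j = 0 \<longleftrightarrow> i = j"
      using ij tpos d_zero_iff eM einj unfolding inK one_point_dist_def by force
    show "?\<delta> i j = ?\<delta> j i"
      using ij d_sym eM unfolding inK one_point_dist_def by auto
  next
    fix i j l assume "i \<in> {0..k}" "j \<in> {0..k}" "l \<in> {0..k}"
    then show "?\<delta> i l \<le> ?\<delta> i j + ?\<delta> j l"
      unfolding inK one_point_dist_def
      apply (elim disjE)
      using tt tpos d_triangle d_sym d_nonneg eM
      by (auto simp: abs_le_iff less_imp_le) (smt (verit) tt d_sym eM)+
  qed
  show "dist_set {0..k} ?\<delta> \<subseteq> D"
    unfolding dist_set_def inK one_point_dist_def using zero_D tD d_in_D eM by auto
qed

text \<open>The extension property: realise the one-point extension inside M and move it
  onto F with an automorphism.\<close>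
theorem extension_property: "extension_property D M d"
  unfolding extension_property_def
proof (intro allI impI, elim conjE)
  fix F t assume F: "finite F" "F \<subseteq> M" and t: "admissible D d F t"
  obtain e where e: "bij_betw e {0..<card F} F" using ex_bij_betw_nat_finite[OF F(1)] by blast
  define k where "k = card F"
  have Fe: "F = e ` {0..<k}" and inj: "inj_on e {0..<k}"
    using e by (auto simp: k_def bij_betw_def)
  let ?\<delta> = "one_point_dist k e t"
  have emb0: "iso_emb {0..<k} ?\<delta> M d e"
    using F(2) Fe unfolding iso_emb_def one_point_dist_def by auto
  have "{0..<k} \<subseteq> {0..k}" "e ` {0..<k} \<subseteq> M" using F(2) Fe by auto
  then obtain \<phi> where \<phi>: "iso_emb {0..k} ?\<delta> M d \<phi>" "\<And>i. i \<in> {0..<k} \<Longrightarrow> \<phi> i = e i"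
    using extend_embedding[OF finite_atLeastAtMost one_point_metric[OF inj _ t[unfolded Fe]] _ emb0]
    by blast
  have dist: "d (\<phi> k) (e i) = t (e i)" if "i < k" for i
  proof -
    have "d (\<phi> k) (\<phi> i) = ?\<delta> k i" using \<phi>(1) that unfolding iso_emb_def by auto
    then show ?thesis using \<phi>(2)[of i] that by (simp add: one_point_dist_def)
  qed
  have "\<phi> k \<notin> F"
  proof
    assume "\<phi> k \<in> F"
    then obtain i where "i < k" "\<phi> k = e i" using Fe by auto
    moreover have "e i \<in> F" using Fe \<open>i < k\<close> by auto
    ultimately have "t (e i) = 0" using dist[of i] d_self F(2) by auto
    then show False using t \<open>e i \<in> F\<close> unfolding admissible_def by fastforce
  qed
  moreover have "\<phi> k \<in> M" using \<phi>(1) by (auto simp: iso_emb_def)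
  moreover have "d (\<phi> k) x = t x" if "x \<in> F" for x
    using dist Fe that by auto
  ultimately show "\<exists>p\<in>M. p \<notin> F \<and> (\<forall>x\<in>F. d p x = t x)" by blast
qed

lemma two_point_automorphism:
  assumes M: "a \<in> M" "b \<in> M" "x \<in> M" "y \<in> M" and eq: "d a b = d x y"
  shows "\<exists>g. bij_betw g M M \<and> iso_emb M d M d g \<and> g a = x \<and> g b = y"
proof -
  define f where "f z = (if z = a then x else y)" for z
  have ab_xy: "a = b \<longleftrightarrow> x = y" using d_zero_iff[OF M(1,2)] d_zero_iff[OF M(3,4)] eq by simp
  have "iso_emb {a, b} d M d f"
    unfolding iso_emb_def
  proof (intro conjI ballI)
    show "f ` {a, b} \<subseteq> M" using M by (auto simp: f_def)
  next
    fix u v assume "u \<in> {a, b}" "v \<in> {a, b}"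
    then show "d (f u) (f v) = d u v"
      using eq ab_xy d_sym[OF M(1,2)] d_sym[OF M(3,4)] d_self M by (auto simp: f_def)
  qed
  moreover have "{a, b} \<subseteq> M" "finite {a, b}" using M by auto
  ultimately obtain g where g: "bij_betw g M M" "iso_emb M d M d g" "\<forall>z\<in>{a, b}. g z = f z"
    using homogeneous[unfolded homogeneous_def, rule_format, of "{a, b}" f] by blast
  have "g a = x" "g b = y" using g(3) ab_xy by (auto simp: f_def)
  then show ?thesis using g(1,2) by blast
qed

end

section \<open>Back and forth\<close>

definition partial_iso :: "'a set \<Rightarrow> 'a set \<Rightarrow> ('a \<Rightarrow> 'a \<Rightarrow> real) \<Rightarrow> ('a \<times> 'a) set \<Rightarrow> bool" where
  "partial_iso A B d P \<longleftrightarrow> finite P \<and> P \<subseteq> A \<times> B \<and> (\<forall>(x, y)\<in>P. \<forall>(x', y')\<in>P. d x x' = d y y')"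

lemma partial_isoD:
  "partial_iso A B d P \<Longrightarrow> (x, y) \<in> P \<Longrightarrow> (x', y') \<in> P \<Longrightarrow> d x x' = d y y'"
  unfolding partial_iso_def by fastforce

lemma partial_iso_swap:
  assumes "partial_iso A B d P"
  shows "partial_iso B A d (prod.swap ` P)"
proof -
  have "d y y' = d x x'" if "(x, y) \<in> P" "(x', y') \<in> P" for x y x' y'
    using partial_isoD[OF assms that] by simp
  then show ?thesis using assms unfolding partial_iso_def by auto
qed

lemma partial_iso_unique:
  assumes A: "metric_on A d" and B: "metric_on B d" and P: "partial_iso A B d P"
    and xy: "(x, y) \<in> P" and x'y: "(x', y) \<in> P"
  shows "x = x'"
proof -
  have x: "x \<in> A" "x' \<in> A" and y: "y \<in> B" using xy x'y P by (auto simp: partial_iso_def)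
  have "d x x' = d y y" using partial_isoD[OF P xy x'y] .
  also have "\<dots> = 0" using metric_on_self[OF B y] .
  finally show ?thesis using metric_on_zero_iff[OF A x] by simp
qed

lemma partial_iso_insert:
  assumes A: "metric_on A d" and B: "metric_on B d" and P: "partial_iso A B d P"
    and ab: "a \<in> A" "b \<in> B" and dist: "\<And>x y. (x, y) \<in> P \<Longrightarrow> d a x = d b y"
  shows "partial_iso A B d (insert (a, b) P)"
proof -
  have PAB: "finite P" "P \<subseteq> A \<times> B" using P by (auto simp: partial_iso_def)
  have dist': "d x a = d y b" if "(x, y) \<in> P" for x y
    using dist[OF that] that PAB ab metric_on_sym[OF A, of x a] metric_on_sym[OF B, of y b] by auto
  have "d x x' = d y y'" if "(x, y) \<in> insert (a, b) P" "(x', y') \<in> insert (a, b) P" for x y x' y'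
    using that partial_isoD[OF P] dist dist' metric_on_self[OF A ab(1)] metric_on_self[OF B ab(2)]
    by auto
  then show ?thesis using PAB ab unfolding partial_iso_def by auto
qed

lemma partial_iso_forth:
  assumes A: "metric_on A d" and B: "metric_on B d" and dA: "dist_set A d \<subseteq> D"
    and ext: "extension_property D B d" and P: "partial_iso A B d P" and a: "a \<in> A"
  shows "\<exists>b. partial_iso A B d (insert (a, b) P)"
proof (cases "\<exists>b. (a, b) \<in> P")
  case True
  then show ?thesis using P by (metis insert_absorb)
next
  case False
  have PAB: "finite P" "P \<subseteq> A \<times> B" using P by (auto simp: partial_iso_def)
  define partner where "partner y = (SOME x. (x, y) \<in> P)" for y
  have partner: "partner y = x" if "(x, y) \<in> P" for x y
    using partial_iso_unique[OF A B P someI[of "\<lambda>x. (x, y) \<in> P", OF that] that]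
    by (simp add: partner_def)
  define t where "t y = d a (partner y)" for y
  have adm: "admissible D d (snd ` P) t"
    unfolding admissible_def
  proof (intro conjI ballI)
    fix y assume "y \<in> snd ` P"
    then obtain x where xy: "(x, y) \<in> P" by force
    then have x: "x \<in> A" "a \<noteq> x" and t: "t y = d a x" using PAB False partner t_def by auto
    show "t y \<in> D" using t dA a x by (auto simp: dist_set_def)
    show "t y > 0"
      using t metric_on_nonneg[OF A a x(1)] metric_on_zero_iff[OF A a x(1)] x(2) by linarith
  next
    fix y y' assume "y \<in> snd ` P" "y' \<in> snd ` P"
    then obtain x x' where xy: "(x, y) \<in> P" "(x', y') \<in> P" by force
    then have x: "x \<in> A" "x' \<in> A" and t: "t y = d a x" "t y' = d a x'"
      using PAB partner t_def by auto
    have "d y y' = d x x'" using partial_isoD[OF P xy] by simp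
    moreover note t metric_on_triangle[OF A a x(1) x(2)] metric_on_triangle[OF A a x(2) x(1)]
        metric_on_triangle[OF A x(1) a x(2)] metric_on_sym[OF A x] metric_on_sym[OF A a x(1)]
    ultimately show "\<bar>t y - t y'\<bar> \<le> d y y'" "d y y' \<le> t y + t y'"
      by (simp_all add: abs_le_iff)
  qed
  have range: "finite (snd ` P)" "snd ` P \<subseteq> B" using PAB by auto
  obtain b where b: "b \<in> B" "\<forall>y\<in>snd ` P. d b y = t y"
    using extension_propertyD[OF ext range adm] by blast
  have "d a x = d b y" if "(x, y) \<in> P" for x y
    using b(2) that partner t_def by force
  then show ?thesis using partial_iso_insert[OF A B P a b(1)] by blast
qed

lemma partial_iso_back:
  assumes A: "metric_on A d" and B: "metric_on B d" and dB: "dist_set B d \<subseteq> D"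
    and ext: "extension_property D A d" and P: "partial_iso A B d P" and b: "b \<in> B"
  shows "\<exists>a. partial_iso A B d (insert (a, b) P)"
proof -
  obtain a where "partial_iso B A d (insert (b, a) (prod.swap ` P))"
    using partial_iso_forth[OF B A dB ext partial_iso_swap[OF P] b] by blast
  then have "partial_iso A B d (prod.swap ` insert (b, a) (prod.swap ` P))"
    by (rule partial_iso_swap)
  moreover have "prod.swap ` insert (b, a) (prod.swap ` P) = insert (a, b) P"
    by (auto simp: image_image)
  ultimately show ?thesis by auto
qed

definition forth_step :: "'a set \<Rightarrow> 'a set \<Rightarrow> ('a \<Rightarrow> 'a \<Rightarrow> real) \<Rightarrow> 'a \<Rightarrow> ('a \<times> 'a) set \<Rightarrow> ('a \<times> 'a) set" where
  "forth_step A B d a P = (SOME P'. \<exists>b. P' = insert (a, b) P \<and> partial_iso A B d P')"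

definition back_step :: "'a set \<Rightarrow> 'a set \<Rightarrow> ('a \<Rightarrow> 'a \<Rightarrow> real) \<Rightarrow> 'a \<Rightarrow> ('a \<times> 'a) set \<Rightarrow> ('a \<times> 'a) set" where
  "back_step A B d b P = (SOME P'. \<exists>a. P' = insert (a, b) P \<and> partial_iso A B d P')"

primrec bf_chain :: "'a set \<Rightarrow> 'a set \<Rightarrow> ('a \<Rightarrow> 'a \<Rightarrow> real) \<Rightarrow> nat \<Rightarrow> ('a \<times> 'a) set" where
  "bf_chain A B d 0 = {}"
| "bf_chain A B d (Suc n) =
     back_step A B d (from_nat_into B n) (forth_step A B d (from_nat_into A n) (bf_chain A B d n))"

lemma forth_step:
  assumes "\<exists>b. partial_iso A B d (insert (a, b) P)"
  shows "\<exists>b. forth_step A B d a P = insert (a, b) P \<and> partial_iso A B d (forth_step A B d a P)"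
  unfolding forth_step_def by (rule someI_ex) (use assms in blast)

lemma back_step:
  assumes "\<exists>a. partial_iso A B d (insert (a, b) P)"
  shows "\<exists>a. back_step A B d b P = insert (a, b) P \<and> partial_iso A B d (back_step A B d b P)"
  unfolding back_step_def by (rule someI_ex) (use assms in blast)

locale back_forth_pair =
  fixes D :: "real set" and A B :: "'a set" and d :: "'a \<Rightarrow> 'a \<Rightarrow> real"
  assumes countable: "countable A" "countable B" and nonempty: "A \<noteq> {}" "B \<noteq> {}"
    and metric: "metric_on A d" "metric_on B d"
    and dist_sets: "dist_set A d \<subseteq> D" "dist_set B d \<subseteq> D"
    and extension: "extension_property D A d" "extension_property D B d"
begin

abbreviation "chain \<equiv> bf_chain A B d"

lemma bf_round:
  assumes P: "partial_iso A B d P" and a: "a \<in> A" and b: "b \<in> B"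
  defines "Q \<equiv> back_step A B d b (forth_step A B d a P)"
  shows "partial_iso A B d Q" "P \<subseteq> Q" "\<exists>b'. (a, b') \<in> Q" "\<exists>a'. (a', b) \<in> Q"
proof -
  obtain b' where b': "forth_step A B d a P = insert (a, b') P"
    and P': "partial_iso A B d (forth_step A B d a P)"
    using forth_step[OF partial_iso_forth[OF metric dist_sets(1) extension(2) P a]] by blast
  obtain a' where a': "Q = insert (a', b) (forth_step A B d a P)" and "partial_iso A B d Q"
    using back_step[OF partial_iso_back[OF metric dist_sets(2) extension(1) P' b]]
    unfolding Q_def by blast
  then show "partial_iso A B d Q" "P \<subseteq> Q" "\<exists>b'. (a, b') \<in> Q" "\<exists>a'. (a', b) \<in> Q"
    using b' by auto
qed

lemma chain_partial_iso: "partial_iso A B d (chain n)"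
proof (induction n)
  case 0
  then show ?case by (simp add: partial_iso_def)
next
  case (Suc n)
  then show ?case
    using bf_round(1)[OF Suc from_nat_into[OF nonempty(1)] from_nat_into[OF nonempty(2)]] by simp
qed

lemma chain_Suc:
  "chain n \<subseteq> chain (Suc n)" "\<exists>b. (from_nat_into A n, b) \<in> chain (Suc n)"
  "\<exists>a. (a, from_nat_into B n) \<in> chain (Suc n)"
  using bf_round(2-4)[OF chain_partial_iso from_nat_into[OF nonempty(1)] from_nat_into[OF nonempty(2)]]
  by simp_all

theorem isometric: "\<exists>g. iso_emb A d B d g \<and> g ` A = B"
proof -
  define U where "U = (\<Union>n. chain n)"
  have mono: "i \<le> j \<Longrightarrow> chain i \<subseteq> chain j" for i j
    by (rule lift_Suc_mono_le[of chain]) (use chain_Suc(1) in blast)+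
  have UAB: "U \<subseteq> A \<times> B" using chain_partial_iso by (auto simp: U_def partial_iso_def)
  have Ud: "d x x' = d y y'" if xy: "(x, y) \<in> U" "(x', y') \<in> U" for x y x' y'
  proof -
    obtain i j where "(x, y) \<in> chain i" "(x', y') \<in> chain j" using xy by (auto simp: U_def)
    then have "(x, y) \<in> chain (max i j)" "(x', y') \<in> chain (max i j)"
      using mono[of i "max i j"] mono[of j "max i j"] by auto
    then show ?thesis using partial_isoD[OF chain_partial_iso] by blast
  qed
  have dom: "\<exists>b. (a, b) \<in> U" if "a \<in> A" for a
  proof -
    obtain n where "from_nat_into A n = a" using from_nat_into_surj[OF countable(1) \<open>a \<in> A\<close>] ..
    moreover obtain b where "(from_nat_into A n, b) \<in> chain (Suc n)" using chain_Suc(2) by blast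
    ultimately show ?thesis unfolding U_def by blast
  qed
  have ran: "\<exists>a. (a, b) \<in> U" if "b \<in> B" for b
  proof -
    obtain n where "from_nat_into B n = b" using from_nat_into_surj[OF countable(2) \<open>b \<in> B\<close>] ..
    moreover obtain a where "(a, from_nat_into B n) \<in> chain (Suc n)" using chain_Suc(3) by blast
    ultimately show ?thesis unfolding U_def by blast
  qed
  define g where "g a = (SOME b. (a, b) \<in> U)" for a
  have gU: "(a, g a) \<in> U" if "a \<in> A" for a
    unfolding g_def using dom[OF that] by (rule someI_ex)
  have gB: "g ` A \<subseteq> B" using gU UAB by blast
  have iso: "iso_emb A d B d g"
    unfolding iso_emb_def using gB Ud[OF gU gU] by simp
  have "b \<in> g ` A" if b: "b \<in> B" for b
  proof -
    obtain a where ab: "(a, b) \<in> U" using ran[OF b] by blast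
    then have a: "a \<in> A" using UAB by auto
    have "d b (g a) = d a a" using Ud[OF ab gU[OF a]] by simp
    then have "b = g a"
      using metric_on_self[OF metric(1) a] metric_on_zero_iff[OF metric(2) b] gB a by auto
    then show ?thesis using a by blast
  qed
  then show ?thesis using iso gB by blast
qed

end

locale isometric_bij =
  fixes A :: "'a set" and dA :: "'a \<Rightarrow> 'a \<Rightarrow> real" and A' :: "'b set" and dB :: "'b \<Rightarrow> 'b \<Rightarrow> real"
    and h :: "'a \<Rightarrow> 'b" and k :: "'b \<Rightarrow> 'a"
  assumes h_in: "\<And>x. x \<in> A \<Longrightarrow> h x \<in> A'" and k_in: "\<And>y. y \<in> A' \<Longrightarrow> k y \<in> A"
    and k_h: "\<And>x. x \<in> A \<Longrightarrow> k (h x) = x" and h_k: "\<And>y. y \<in> A' \<Longrightarrow> h (k y) = y"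
    and iso: "\<And>x y. x \<in> A \<Longrightarrow> y \<in> A \<Longrightarrow> dB (h x) (h y) = dA x y"
begin

lemma image_eq: "A' = h ` A"
  using h_in k_in h_k by (metis image_eqI subsetI subset_antisym image_subset_iff)

lemma bij: "bij_betw h A A'"
proof -
  have "\<forall>x\<in>A. k (h x) = x" "\<forall>y\<in>A'. h (k y) = y" "h ` A \<subseteq> A'" "k ` A' \<subseteq> A"
    using h_in k_in k_h h_k by auto
  then show ?thesis by (rule bij_betw_byWitness)
qed

lemma inverse: "isometric_bij A' dB A dA k h"
  by unfold_locales (use k_in h_in h_k k_h iso in \<open>simp_all add: iso[symmetric]\<close>)

lemma conjugate:
  assumes S: "S \<subseteq> A" and g: "iso_emb S dA A dA g"
  shows "iso_emb (h ` S) dB A' dB (h \<circ> g \<circ> k)" "\<And>x. x \<in> S \<Longrightarrow> (h \<circ> g \<circ> k) (h x) = h (g x)"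
proof -
  have gA: "g x \<in> A" if "x \<in> S" for x using g that by (auto simp: iso_emb_def)
  show conj: "(h \<circ> g \<circ> k) (h x) = h (g x)" if "x \<in> S" for x using k_h S that by auto
  show "iso_emb (h ` S) dB A' dB (h \<circ> g \<circ> k)"
    unfolding iso_emb_def
  proof (intro conjI ballI)
    show "(h \<circ> g \<circ> k) ` h ` S \<subseteq> A'" using conj gA h_in by auto
  next
    fix y y' assume "y \<in> h ` S" "y' \<in> h ` S"
    then obtain x x' where x: "x \<in> S" "x' \<in> S" "y = h x" "y' = h x'" by blast
    have "dB ((h \<circ> g \<circ> k) y) ((h \<circ> g \<circ> k) y') = dA (g x) (g x')" using x conj gA iso by simp
    also have "\<dots> = dA x x'" using g x by (simp add: iso_emb_def)
    also have "\<dots> = dB y y'" using x iso[of x x'] S by (simp add: subset_iff)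
    finally show "dB ((h \<circ> g \<circ> k) y) ((h \<circ> g \<circ> k) y') = dB y y'" .
  qed
qed

lemma metric_on: "metric_on A dA \<Longrightarrow> metric_on A' dB"
  unfolding metric_on_def image_eq by (simp add: iso) (metis k_h)

lemma dist_set: "dist_set A' dB = dist_set A dA"
  unfolding dist_set_def image_eq by (force simp: iso)

lemma embeds_all_finite:
  assumes emb: "embeds_all_finite D A dA"
  shows "embeds_all_finite D A' dB"
  unfolding embeds_all_finite_def
proof (intro allI impI)
  fix F :: "nat set" and dF assume "finite F \<and> metric_on F dF \<and> dist_set F dF \<subseteq> D"
  then obtain f where f: "iso_emb F dF A dA f" using emb unfolding embeds_all_finite_def by blast
  have "iso_emb F dF A' dB (h \<circ> f)"
    using f h_in unfolding iso_emb_def by (auto simp: iso image_subset_iff)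
  then show "\<exists>f. iso_emb F dF A' dB f" by blast
qed

text \<open>Homogeneity: pull a finite partial isometry back to A, extend it there, and push the
  extension forward.\<close>
lemma homogeneous:
  assumes hom: "homogeneous A dA"
  shows "homogeneous A' dB"
  unfolding homogeneous_def
proof (intro allI impI, elim conjE)
  fix F f assume F: "F \<subseteq> A'" "finite F" and f: "iso_emb F dB A' dB f"
  interpret inv: isometric_bij A' dB A dA k h by (rule inverse)
  have "k ` F \<subseteq> A" "finite (k ` F)" using F k_in by auto
  then obtain g where g: "bij_betw g A A" "iso_emb A dA A dA g" and gF: "\<forall>x\<in>k ` F. g x = (k \<circ> f \<circ> h) x"
    using hom[unfolded homogeneous_def, rule_format, of "k ` F"] inv.conjugate(1)[OF F(1) f] by blast
  have "bij_betw (h \<circ> g \<circ> k) A' A'"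
    using bij_betw_trans[OF bij_betw_trans[OF inv.bij g(1)] bij] by (simp add: comp_assoc)
  moreover have "iso_emb A' dB A' dB (h \<circ> g \<circ> k)" using conjugate(1)[OF _ g(2)] image_eq by simp
  moreover have "(h \<circ> g \<circ> k) y = f y" if y: "y \<in> F" for y
  proof -
    have fy: "f y \<in> A'" using f y by (auto simp: iso_emb_def)
    have "(h \<circ> g \<circ> k) y = h ((k \<circ> f \<circ> h) (k y))" using gF y by simp
    also have "\<dots> = f y" using h_k k_in F y fy by (simp add: subset_iff)
    finally show ?thesis .
  qed
  ultimately show "\<exists>g'. bij_betw g' A' A' \<and> iso_emb A' dB A' dB g' \<and> (\<forall>y\<in>F. g' y = f y)"
    by blast
qed

lemma in_U: "in_U D A dA \<Longrightarrow> in_U D A' dB"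
  using metric_on dist_set homogeneous embeds_all_finite image_eq by (simp add: in_U_def)

end

text \<open>Any space of the class U_D witnesses universality of D (copy it onto a set of
  natural numbers).\<close>
lemma universal_dist_of_in_U:
  fixes A :: "'a set"
  assumes U: "in_U D A dA"
  shows "universal_dist D"
proof -
  let ?h = "to_nat_on A" let ?k = "from_nat_into A"
  have "countable A" using U by (simp add: in_U_def)
  then interpret isometric_bij A dA "?h ` A" "\<lambda>i j. dA (?k i) (?k j)" ?h ?k
    by unfold_locales (auto simp: from_nat_into)
  show ?thesis using in_U[OF U] unfolding universal_dist_def by blast
qed

section \<open>The gap above a block\<close>

lemma succD_greater:
  assumes "finite D" "s \<in> D" "x < s"
  shows "succD D x \<in> D" "x < succD D x" "\<And>u. u \<in> D \<Longrightarrow> x < u \<Longrightarrow> succD D x \<le> u"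
proof -
  have fin: "finite {u \<in> D. u > x}" and ne: "{u \<in> D. u > x} \<noteq> {}" using assms by auto
  show "succD D x \<in> D" "x < succD D x"
    using Min_in[OF fin ne] unfolding succD_def by auto
  show "succD D x \<le> u" if "u \<in> D" "x < u" for u
    using fin that unfolding succD_def by simp
qed

text \<open>Maximality of a block: the successor r of its maximum m cannot be added to it,
  so r exceeds m + Min B.\<close>
lemma block_succ_Max:
  assumes D: "finite D" "\<forall>u\<in>D. u \<ge> 0" and B: "B \<in> blocks D" and s: "s \<in> D" "Max B < s"
  shows "Max B + Min B < succD D (Max B)"
proof (rule ccontr)
  let ?m = "Max B" and ?r = "succD D (Max B)"
  assume "\<not> ?m + Min B < ?r"
  have pb: "pre_block D B" and maximal: "\<And>B'. pre_block D B' \<Longrightarrow> B \<subseteq> B' \<Longrightarrow> B' = B"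
    using B by (auto simp: blocks_def)
  have BD: "B \<noteq> {}" "B \<subseteq> D - {0}" using pb by (auto simp: pre_block_def)
  have fin: "finite B" using BD D(1) finite_subset by blast
  have r: "?r \<in> D" "?m < ?r" using succD_greater[OF D(1) s] by auto
  have m: "?m \<in> B" "Min B \<le> ?m" using Max_in[OF fin BD(1)] Min_le[OF fin] by auto
  have "Min (insert ?r B) = min ?r (Min B)" "Max (insert ?r B) = max ?r ?m" using fin BD(1) by simp_all
  then have min': "Min (insert ?r B) = Min B" and max': "Max (insert ?r B) = ?r"
    using r(2) m(2) by simp_all
  have "pre_block D (insert ?r B)"
    unfolding pre_block_def min' max'
  proof (intro conjI ballI impI)
    show "insert ?r B \<noteq> {}" by simp
    have "?m \<ge> 0" using BD m(1) D(2) by blast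
    then show "insert ?r B \<subseteq> D - {0}" using BD(2) r by auto
    show "2 * predD D (Min B) < Min B" using pb by (simp add: pre_block_def)
  next
    fix b assume "b \<in> insert ?r B" "b < ?r"
    then have b: "b \<in> B" "b \<le> ?m" using fin by auto
    have "succD D b \<in> insert ?r B \<and> succD D b \<le> b + Min B"
    proof (cases "b = ?m")
      case True
      then show ?thesis using \<open>\<not> ?m + Min B < ?r\<close> by simp
    next
      case False
      then have "b < ?m" using b(2) by simp
      then show ?thesis using pb b(1) unfolding pre_block_def by blast
    qed
    then show "succD D b \<in> insert ?r B" "succD D b \<le> b + Min B" by auto
  qed
  then have "insert ?r B = B" using maximal by blast
  then have "?r \<in> B" by blast
  then show False using Max_ge[OF fin] r(2) by fastforce
qed

lemma block_witnesses:
  assumes D: "finite D" and pb: "pre_block D B"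
    and r: "Max B + Min B < r" "r \<le> 2 * Max B"
  obtains b' c where "b' \<in> B" "c \<in> B" "Min B \<le> b'" "b' < c" "c \<le> b' + Min B"
    "Max B + b' < r" "r \<le> Max B + c"
proof -
  let ?m = "Max B"
  have BD: "B \<noteq> {}" "B \<subseteq> D - {0}" using pb by (auto simp: pre_block_def)
  have fin: "finite B" using BD D finite_subset by blast
  define L where "L = {b \<in> B. ?m + b < r}"
  have L: "finite L" "Min B \<in> L" using fin Min_in[OF fin BD(1)] r(1) by (auto simp: L_def)
  define b' where "b' = Max L"
  have b': "b' \<in> B" "?m + b' < r" using Max_in[OF L(1)] L(2) by (auto simp: b'_def L_def)
  have b'_max: "b \<in> B \<Longrightarrow> ?m + b < r \<Longrightarrow> b \<le> b'" for b using L(1) by (auto simp: b'_def L_def)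
  have "b' < ?m" using Max_ge[OF fin b'(1)] b'(2) r(2) by linarith
  then have c: "succD D b' \<in> B" "succD D b' \<le> b' + Min B" using pb b' by (auto simp: pre_block_def)
  have "b' < succD D b'"
    using succD_greater(2)[OF D _ \<open>b' < ?m\<close>] Max_in[OF fin BD(1)] BD by blast
  moreover have "r \<le> ?m + succD D b'" using b'_max[OF c(1)] \<open>b' < succD D b'\<close> by force
  moreover have "Min B \<le> b'" using fin b' by simp
  ultimately show ?thesis using that b' c by blast
qed

context U_space
begin

lemma distance_between:
  assumes D: "b0 \<in> D" "b' \<in> D" "c \<in> D" "m \<in> D" "r \<in> D" and pos: "b0 > 0" "m > 0"
    and ineq: "b0 \<le> b'" "b' < c" "c \<le> b' + b0" "c \<le> m" "m + b0 < r" "m + b' < r" "r \<le> m + c"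
  shows "\<exists>s\<in>D. m < s \<and> s < r"
proof -
  obtain p where p: "p \<in> M" using nonempty by blast
  have "admissible D d {p} (\<lambda>_. c)"
    using D pos ineq d_self[OF p] by (intro admissible_singleton) auto
  then obtain q where q: "q \<in> M" "q \<noteq> p" "d q p = c"
    using extension_propertyD[OF extension_property, of "{p}"] p by blast
  have pq: "d p q = c" using q d_sym[OF p q(1)] by simp
  have pq_facts: "d p p = 0" "d q q = 0" "d q p = d p q" using d_self p q pq by auto
  let ?ta = "\<lambda>x. if x = p then r else m" and ?tb = "\<lambda>x. if x = p then b0 else b'"
  have "admissible D d {p, q} ?ta"
    by (rule admissible_pair) (use D pos ineq q(2) pq pq_facts in \<open>auto simp: abs_le_iff\<close>)
  then obtain a where a: "a \<in> M" "\<forall>x\<in>{p, q}. d a x = ?ta x"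
    using extension_propertyD[OF extension_property, of "{p, q}"] p q by blast
  have "admissible D d {p, q} ?tb"
    by (rule admissible_pair) (use D pos ineq q(2) pq pq_facts in \<open>auto simp: abs_le_iff\<close>)
  then obtain b where b: "b \<in> M" "\<forall>x\<in>{p, q}. d b x = ?tb x"
    using extension_propertyD[OF extension_property, of "{p, q}"] p q by blast
  have ab: "d a p = r" "d a q = m" "d b p = b0" "d q b = b'"
    using a(2) b(2) q(2) d_sym[OF q(1) b(1)] by auto
  have "r \<le> d a b + b0" using d_triangle[OF a(1) b(1) p] ab by simp
  moreover have "d a b \<le> m + b'" using d_triangle[OF a(1) q(1) b(1)] ab by simp
  ultimately have "m < d a b" "d a b < r" using ineq by linarith+
  then show ?thesis using d_in_D[OF a(1) b(1)] by blast
qed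

theorem block_gap:
  assumes B: "B \<in> blocks D" and s: "s \<in> D" "Max B < s"
  shows "2 * Max B < s"
proof (rule ccontr)
  assume "\<not> 2 * Max B < s"
  let ?m = "Max B" and ?r = "succD D (Max B)"
  have pb: "pre_block D B" using B by (simp add: blocks_def)
  have BD: "B \<noteq> {}" "B \<subseteq> D - {0}" using pb by (auto simp: pre_block_def)
  have fin: "finite B" using BD finite_D finite_subset by blast
  have Dpos: "u \<in> D - {0} \<Longrightarrow> u > 0" for u
    using dist_set_eq d_nonneg by (force simp: dist_set_def)
  have nonneg: "\<forall>u\<in>D. u \<ge> 0" using Dpos by force
  have r: "?r \<in> D" "?m < ?r" "\<And>u. u \<in> D \<Longrightarrow> ?m < u \<Longrightarrow> ?r \<le> u"
    using succD_greater[OF finite_D s] by auto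
  have "?r \<le> 2 * ?m" using r(3)[OF s] \<open>\<not> 2 * ?m < s\<close> s by simp
  moreover have big: "?m + Min B < ?r" using block_succ_Max[OF finite_D nonneg B s] .
  ultimately obtain b' c where bc: "b' \<in> B" "c \<in> B" "Min B \<le> b'" "b' < c" "c \<le> b' + Min B"
    "?m + b' < ?r" "?r \<le> ?m + c"
    using block_witnesses[OF finite_D pb] by blast
  have inB: "Min B \<in> B" "?m \<in> B" using fin BD(1) by auto
  then have inD: "Min B \<in> D" "b' \<in> D" "c \<in> D" "?m \<in> D" using bc BD by auto
  have pos: "Min B > 0" "?m > 0" using inB BD Dpos by auto
  have "c \<le> ?m" using fin bc(2) by simp
  then obtain u where "u \<in> D" "?m < u" "u < ?r"
    using distance_between[OF inD r(1) pos bc(3-5) _ big bc(6-7)] by blast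
  then show False using r(3) by force
qed

end

section \<open>The quotient by the relation d \<le> m: classes and class distances\<close>

locale U_quotient = U_space +
  fixes m :: real
  assumes m_D: "m \<in> D" and m_pos: "m > 0" and gap: "\<And>s. s \<in> D \<Longrightarrow> m < s \<Longrightarrow> 2 * m < s"
begin

abbreviation "R \<equiv> close_rel M d m"
abbreviation "Q \<equiv> M // R"
abbreviation "cls x \<equiv> R `` {x}"

text \<open>The gap above m makes closeness transitive.\<close>
lemma close_equiv: "equiv M R"
proof (rule equivI)
  show "R \<subseteq> M \<times> M" by (auto simp: close_rel_def)
  show "refl_on M R" unfolding refl_on_def close_rel_def using d_self m_pos by auto
  show "sym R" unfolding sym_def close_rel_def using d_sym by auto
  show "trans R" unfolding trans_def close_rel_def
  proof (clarsimp)
    fix x y z assume "x \<in> M" "y \<in> M" "z \<in> M" "d x y \<le> m" "d y z \<le> m"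
    then have "d x z \<le> 2 * m" "d x z \<in> D" using d_triangle[of x y z] d_in_D by auto
    then show "d x z \<le> m" using gap by force
  qed
qed

lemma mem_cls: "x \<in> M \<Longrightarrow> y \<in> cls x \<longleftrightarrow> y \<in> M \<and> d x y \<le> m"
  by (simp add: close_rel_def)

lemma cls_in_Q: "x \<in> M \<Longrightarrow> cls x \<in> Q"
  by (rule quotientI)

lemma Q_subset: "X \<in> Q \<Longrightarrow> X \<subseteq> M"
  using in_quotient_imp_subset[OF close_equiv] by blast

lemma Q_nonempty: "X \<in> Q \<Longrightarrow> X \<noteq> {}"
  using in_quotient_imp_non_empty[OF close_equiv] by blast

lemma self_in_cls: "x \<in> M \<Longrightarrow> x \<in> cls x"
  using equiv_class_self[OF close_equiv] by blast

lemma cls_of_member: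
  assumes "X \<in> Q" "x \<in> X"
  shows "cls x = X"
proof -
  obtain x0 where "x0 \<in> M" "X = cls x0" using assms(1) by (rule quotientE)
  then show ?thesis using equiv_class_eq[OF close_equiv, of x0 x] assms(2) by simp
qed

lemma class_eq_iff: "X \<in> Q \<Longrightarrow> Y \<in> Q \<Longrightarrow> x \<in> X \<Longrightarrow> y \<in> Y \<Longrightarrow> X = Y \<longleftrightarrow> d x y \<le> m"
  using quotient_eq_iff[OF close_equiv] Q_subset by (simp add: close_rel_def) blast

lemma countable_Q: "countable Q"
  unfolding quotient_def using countable by (simp add: UNION_singleton_eq_range)

lemma dmin_attained:
  assumes "X \<in> Q" "Y \<in> Q"
  shows "finite {d a b | a b. a \<in> X \<and> b \<in> Y}" "\<exists>a\<in>X. \<exists>b\<in>Y. d a b = dmin d X Y"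
proof -
  let ?S = "{d a b | a b. a \<in> X \<and> b \<in> Y}"
  have "?S \<subseteq> D"
  proof
    fix u assume "u \<in> ?S"
    then obtain a b where "a \<in> X" "b \<in> Y" "u = d a b" by blast
    then show "u \<in> D" using d_in_D Q_subset[OF assms(1)] Q_subset[OF assms(2)] by auto
  qed
  then show fin: "finite ?S" using finite_D finite_subset by blast
  obtain a b where "a \<in> X" "b \<in> Y" using assms Q_nonempty by blast
  then have "?S \<noteq> {}" by blast
  then have "Min ?S \<in> ?S" using fin by (rule Min_in[rotated])
  then obtain a b where "a \<in> X" "b \<in> Y" "Min ?S = d a b" by blast
  then show "\<exists>a\<in>X. \<exists>b\<in>Y. d a b = dmin d X Y" unfolding dmin_def by auto
qed

lemma dmin_le:
  assumes "X \<in> Q" "Y \<in> Q" "a \<in> X" "b \<in> Y"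
  shows "dmin d X Y \<le> d a b"
proof -
  have "d a b \<in> {d a b | a b. a \<in> X \<and> b \<in> Y}" using assms(3,4) by blast
  then show ?thesis unfolding dmin_def using dmin_attained(1)[OF assms(1,2)] by simp
qed

lemma dmin_in_D_nonneg:
  assumes "X \<in> Q" "Y \<in> Q"
  shows "dmin d X Y \<in> D" "dmin d X Y \<ge> 0"
proof -
  obtain a b where "a \<in> X" "b \<in> Y" "d a b = dmin d X Y" using dmin_attained(2)[OF assms] by blast
  moreover have "a \<in> M" "b \<in> M" using calculation Q_subset[OF assms(1)] Q_subset[OF assms(2)] by auto
  ultimately show "dmin d X Y \<in> D" "dmin d X Y \<ge> 0"
    using d_in_D[of a b] d_nonneg[of a b] by simp_all
qed

lemma dmin_self:
  assumes "X \<in> Q"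
  shows "dmin d X X = 0"
proof -
  obtain a where "a \<in> X" using Q_nonempty[OF assms] by blast
  then have "dmin d X X \<le> d a a" "d a a = 0"
    using dmin_le[OF assms assms] d_self Q_subset[OF assms] by auto
  then show ?thesis using dmin_in_D_nonneg(2)[OF assms assms] by simp
qed

lemma dmin_sym: "X \<in> Q \<Longrightarrow> Y \<in> Q \<Longrightarrow> dmin d X Y = dmin d Y X"
proof -
  have swap: "{d a b | a b. a \<in> X \<and> b \<in> Y} \<subseteq> {d a b | a b. a \<in> Y \<and> b \<in> X}"
    if "X \<in> Q" "Y \<in> Q" for X Y
  proof
    fix u assume "u \<in> {d a b | a b. a \<in> X \<and> b \<in> Y}"
    then obtain a b where ab: "a \<in> X" "b \<in> Y" "u = d a b" by blast
    then have "u = d b a" using d_sym Q_subset[OF that(1)] Q_subset[OF that(2)] by auto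
    then show "u \<in> {d a b | a b. a \<in> Y \<and> b \<in> X}" using ab by blast
  qed
  assume "X \<in> Q" "Y \<in> Q"
  then show ?thesis using swap[of X Y] swap[of Y X] by (simp add: dmin_def)
qed

lemma dmin_distinct: "X \<in> Q \<Longrightarrow> Y \<in> Q \<Longrightarrow> X \<noteq> Y \<Longrightarrow> dmin d X Y > m"
proof -
  assume XY: "X \<in> Q" "Y \<in> Q" "X \<noteq> Y"
  obtain a b where "a \<in> X" "b \<in> Y" "d a b = dmin d X Y" using dmin_attained(2)[OF XY(1,2)] by blast
  moreover have "\<not> d a b \<le> m" using class_eq_iff[OF XY(1,2) calculation(1,2)] XY(3) by simp
  ultimately show ?thesis by simp
qed

lemma dmin_zero_iff: "X \<in> Q \<Longrightarrow> Y \<in> Q \<Longrightarrow> dmin d X Y = 0 \<longleftrightarrow> X = Y"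
  using dmin_self[of X] dmin_distinct[of X Y] m_pos by (cases "X = Y") auto

lemma same_class: "X \<in> Q \<Longrightarrow> x \<in> X \<Longrightarrow> y \<in> X \<Longrightarrow> d x y \<le> m"
  using class_eq_iff[of X X x y] by simp

lemma realise_near:
  assumes W: "W \<in> Q" "w \<in> W" and F: "finite F" "F \<subseteq> M" "F \<inter> W = {}"
    and t: "admissible D d F t"
    and window: "\<And>x. x \<in> F \<Longrightarrow> \<bar>m - t x\<bar> \<le> d w x \<and> d w x \<le> m + t x"
  shows "\<exists>q\<in>W. q \<notin> F \<and> (\<forall>x\<in>F. d q x = t x)"
proof -
  have w: "w \<in> M" "w \<notin> F" using Q_subset[OF W(1)] W(2) F(3) by auto
  have sym: "d x w = d w x" if "x \<in> F" for x using d_sym[OF _ w(1)] F(2) that by blast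
  have "admissible D d (insert w F) (t(w := m))"
    using admissible_insert[OF t m_D m_pos d_self[OF w(1)] sym window] by blast
  moreover have "finite (insert w F)" "insert w F \<subseteq> M" using F w by auto
  ultimately obtain q where q: "q \<in> M" "q \<notin> insert w F" "\<forall>x\<in>insert w F. d q x = (t(w := m)) x"
    using extension_propertyD[OF extension_property] by blast
  have "d q w = m" and dist: "\<forall>x\<in>F. d q x = t x" using q(3) w(2) by auto
  then have "q \<in> cls w" using mem_cls[OF w(1)] d_sym[OF w(1) q(1)] q(1) by simp
  then have "q \<in> W" using cls_of_member[OF W] by simp
  then show ?thesis using q(2) dist by blast
qed

lemma dmin_realised:
  assumes X: "X \<in> Q" and Y: "Y \<in> Q" and x: "x \<in> X"
  shows "\<exists>y\<in>Y. d x y = dmin d X Y"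
proof (cases "X = Y")
  case True
  then show ?thesis using x dmin_self[OF X] d_self Q_subset[OF X] by auto
next
  case False
  let ?r = "dmin d X Y"
  obtain x0 y0 where x0: "x0 \<in> X" and y0: "y0 \<in> Y" and r: "d x0 y0 = ?r"
    using dmin_attained(2)[OF X Y] by blast
  have M: "x \<in> M" "x0 \<in> M" "y0 \<in> M" using Q_subset[OF X] Q_subset[OF Y] x x0 y0 by auto
  have rm: "?r > m" using dmin_distinct[OF X Y False] .
  have "x \<notin> Y" using cls_of_member[OF X x] cls_of_member[OF Y] False by auto
  then have disj: "{x} \<inter> Y = {}" by blast
  have adm: "admissible D d {x} (\<lambda>_. ?r)"
    using dmin_in_D_nonneg(1)[OF X Y] rm m_pos d_self[OF M(1)] by (intro admissible_singleton) auto
  have "?r \<le> d y0 x" using dmin_le[OF X Y x y0] d_sym[OF M(1) M(3)] by simp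
  moreover have "d y0 x \<le> d y0 x0 + d x0 x" using d_triangle[OF M(3) M(2) M(1)] .
  moreover have "d x0 x \<le> m" using same_class[OF X x0 x] .
  ultimately have "\<bar>m - ?r\<bar> \<le> d y0 x \<and> d y0 x \<le> m + ?r"
    using r d_sym[OF M(2) M(3)] rm by (simp add: abs_le_iff)
  then obtain q where q: "q \<in> Y" "d q x = ?r"
    using realise_near[OF Y y0 _ _ disj adm] M(1) by auto
  then have "d x q = ?r" using d_sym[OF M(1), of q] Q_subset[OF Y] by auto
  then show ?thesis using q(1) by blast
qed

lemma dmin_bounds:
  assumes XY: "X \<in> Q" "Y \<in> Q" and xy: "x \<in> X" "y \<in> Y"
  shows "dmin d X Y \<le> d x y" "d x y \<le> dmin d X Y + m"
proof -
  show "dmin d X Y \<le> d x y" using dmin_le[OF XY xy] .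
  obtain y' where y': "y' \<in> Y" "d x y' = dmin d X Y" using dmin_realised[OF XY xy(1)] by blast
  have M: "x \<in> M" "y' \<in> M" "y \<in> M" using Q_subset[OF XY(1)] Q_subset[OF XY(2)] xy y' by auto
  show "d x y \<le> dmin d X Y + m"
    using d_triangle[OF M] same_class[OF XY(2) y'(1) xy(2)] y'(2) by simp
qed

text \<open>The triangle inequality for dmin, via a point of Y realising dmin Y Z.\<close>
lemma dmin_triangle:
  assumes XYZ: "X \<in> Q" "Y \<in> Q" "Z \<in> Q"
  shows "dmin d X Z \<le> dmin d X Y + dmin d Y Z"
proof -
  obtain a b where ab: "a \<in> X" "b \<in> Y" "d a b = dmin d X Y" using dmin_attained(2)[OF XYZ(1,2)] by blast
  obtain c where c: "c \<in> Z" "d b c = dmin d Y Z" using dmin_realised[OF XYZ(2,3) ab(2)] by blast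
  have M: "a \<in> M" "b \<in> M" "c \<in> M"
    using Q_subset[OF XYZ(1)] Q_subset[OF XYZ(2)] Q_subset[OF XYZ(3)] ab c by auto
  have "dmin d X Z \<le> d a c" using dmin_le[OF XYZ(1,3) ab(1) c(1)] .
  also have "\<dots> \<le> d a b + d b c" using d_triangle[OF M] .
  finally show ?thesis using ab c by simp
qed

theorem metric_Q: "metric_on Q (dmin d)"
  unfolding metric_on_def
  using dmin_in_D_nonneg(2) dmin_zero_iff dmin_sym dmin_triangle by blast

lemma realise_in_class:
  assumes W: "W \<in> Q" and F: "finite F" "F \<subseteq> M" and t: "admissible D d F t"
    and window: "\<And>x. x \<in> F \<Longrightarrow> m < dmin d W (cls x) \<and> dmin d W (cls x) \<le> t x \<and> t x \<le> dmin d W (cls x) + m"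
  shows "\<exists>q\<in>W. q \<notin> F \<and> (\<forall>x\<in>F. d q x = t x)"
proof -
  obtain w where w: "w \<in> W" using Q_nonempty[OF W] by blast
  have disj: "F \<inter> W = {}"
  proof (rule ccontr)
    assume "F \<inter> W \<noteq> {}"
    then obtain x where x: "x \<in> F" "x \<in> W" by blast
    then have "cls x = W" using cls_of_member[OF W] by simp
    then show False using window[OF x(1)] dmin_self[OF W] m_pos by simp
  qed
  have "\<bar>m - t x\<bar> \<le> d w x \<and> d w x \<le> m + t x" if x: "x \<in> F" for x
  proof -
    have "x \<in> M" using F(2) x by blast
    then have "dmin d W (cls x) \<le> d w x" "d w x \<le> dmin d W (cls x) + m"
      using dmin_bounds[OF W cls_in_Q w self_in_cls] by auto
    then show ?thesis using window[OF x] by (simp add: abs_le_iff)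
  qed
  then show ?thesis using realise_near[OF W w F disj t] by blast
qed

lemma extend_representatives:
  assumes G: "finite G" "G \<subseteq> Q" and X: "X \<in> Q" "X \<notin> G"
    and rep: "\<forall>Y\<in>G. rep Y \<in> Y" "\<forall>Y\<in>G. \<forall>Y'\<in>G. d (rep Y) (rep Y') = dmin d Y Y'"
  shows "\<exists>q\<in>X. \<forall>Y\<in>G. d q (rep Y) = dmin d X Y"
proof -
  have GQ: "Y \<in> Q" if "Y \<in> G" for Y using G(2) that by blast
  have repM: "rep Y \<in> M" and cls_rep: "cls (rep Y) = Y" if "Y \<in> G" for Y
    using Q_subset[OF GQ[OF that]] cls_of_member[OF GQ[OF that]] rep(1) that by auto
  have far: "m < dmin d X Y" if "Y \<in> G" for Y
  proof -
    have "X \<noteq> Y" using X(2) that by blast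
    then show ?thesis using dmin_distinct[OF X(1) GQ[OF that]] by blast
  qed
  define t where "t z = dmin d X (cls z)" for z
  have t_rep: "t (rep Y) = dmin d X Y" if "Y \<in> G" for Y using cls_rep[OF that] by (simp add: t_def)
  have adm: "admissible D d (rep ` G) t"
    unfolding admissible_def
  proof (intro conjI ballI)
    fix z assume "z \<in> rep ` G"
    then obtain Y where Y: "Y \<in> G" "z = rep Y" by blast
    show "t z \<in> D" using Y t_rep dmin_in_D_nonneg(1)[OF X(1) GQ[OF Y(1)]] by simp
    show "t z > 0" using Y t_rep far[OF Y(1)] m_pos by simp
  next
    fix z z' assume "z \<in> rep ` G" "z' \<in> rep ` G"
    then obtain Y Y' where Y: "Y \<in> G" "Y' \<in> G" "z = rep Y" "z' = rep Y'" by blast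
    have Q: "Y \<in> Q" "Y' \<in> Q" using GQ Y by auto
    have "dmin d X Y \<le> dmin d X Y' + dmin d Y' Y" "dmin d X Y' \<le> dmin d X Y + dmin d Y Y'"
      "dmin d Y Y' \<le> dmin d Y X + dmin d X Y'"
      using dmin_triangle[OF X(1) Q(2) Q(1)] dmin_triangle[OF X(1) Q(1) Q(2)]
        dmin_triangle[OF Q(1) X(1) Q(2)] .
    moreover have "dmin d Y' Y = dmin d Y Y'" "dmin d Y X = dmin d X Y"
      using dmin_sym[OF Q(2) Q(1)] dmin_sym[OF Q(1) X(1)] .
    moreover have "d z z' = dmin d Y Y'" using rep(2) Y by simp
    ultimately show "\<bar>t z - t z'\<bar> \<le> d z z'" "d z z' \<le> t z + t z'"
      using t_rep Y by (simp_all add: abs_le_iff)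
  qed
  have window: "m < dmin d X (cls z) \<and> dmin d X (cls z) \<le> t z \<and> t z \<le> dmin d X (cls z) + m"
    if z: "z \<in> rep ` G" for z
  proof -
    obtain Y where "Y \<in> G" "z = rep Y" using z by blast
    then show ?thesis using far cls_rep m_pos by (simp add: t_def)
  qed
  have "rep ` G \<subseteq> M" using repM by blast
  then obtain q where q: "q \<in> X" "\<forall>z\<in>rep ` G. d q z = t z"
    using realise_in_class[OF X(1) finite_imageI[OF G(1)] _ adm window] by blast
  then show ?thesis using t_rep by auto
qed

lemma class_representatives:
  assumes "finite G" "G \<subseteq> Q"
  shows "\<exists>rep. (\<forall>X\<in>G. rep X \<in> X) \<and> (\<forall>X\<in>G. \<forall>Y\<in>G. d (rep X) (rep Y) = dmin d X Y)"
  using assms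
proof (induction G rule: finite_induct)
  case empty
  then show ?case by simp
next
  case (insert X G)
  have X: "X \<in> Q" and G: "G \<subseteq> Q" using insert.prems by auto
  obtain rep where rep: "\<forall>Y\<in>G. rep Y \<in> Y" "\<forall>Y\<in>G. \<forall>Y'\<in>G. d (rep Y) (rep Y') = dmin d Y Y'"
    using insert.IH[OF G] by blast
  obtain q where q: "q \<in> X" "\<forall>Y\<in>G. d q (rep Y) = dmin d X Y"
    using extend_representatives[OF insert.hyps(1) G X insert.hyps(2) rep] by blast
  have qM: "q \<in> M" using Q_subset[OF X] q(1) by blast
  have q_rep: "d q (rep Y) = dmin d X Y" "d (rep Y) q = dmin d Y X" if Y: "Y \<in> G" for Y
  proof -
    have "Y \<in> Q" "rep Y \<in> M" using G Y rep(1) Q_subset[of Y] by auto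
    then show "d q (rep Y) = dmin d X Y" "d (rep Y) q = dmin d Y X"
      using q(2) Y d_sym[OF qM] dmin_sym[OF X] by auto
  qed
  show ?case
  proof (intro exI[of _ "rep(X := q)"] conjI ballI)
    fix Y assume "Y \<in> insert X G"
    then show "(rep(X := q)) Y \<in> Y" using q(1) rep(1) by auto
  next
    fix Y Y' assume Y: "Y \<in> insert X G" "Y' \<in> insert X G"
    show "d ((rep(X := q)) Y) ((rep(X := q)) Y') = dmin d Y Y'"
    proof (cases "Y = X"; cases "Y' = X")
      assume "Y \<noteq> X" "Y' \<noteq> X"
      then show ?thesis using Y rep(2) by simp
    next
      assume "Y \<noteq> X" "Y' = X"
      then show ?thesis using Y q_rep(2)[of Y] by simp
    next
      assume "Y = X" "Y' \<noteq> X"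
      then show ?thesis using Y q_rep(1)[of Y'] insert.hyps(2) by auto
    qed (simp add: d_self[OF qM] dmin_self[OF X])
  qed
qed

lemma automorphism_cls:
  assumes g: "bij_betw g M M" "iso_emb M d M d g" and x: "x \<in> M"
  shows "g ` cls x = cls (g x)"
proof
  have gM: "g y \<in> M" if "y \<in> M" for y using bij_betwE[OF g(1)] that by blast
  have onto: "\<exists>y\<in>M. z = g y" if "z \<in> M" for z
    using bij_betw_imp_surj_on[OF g(1)] that by blast
  have dist: "d (g x) (g y) = d x y" if "y \<in> M" for y using g(2) x that by (simp add: iso_emb_def)
  show "g ` cls x \<subseteq> cls (g x)"
  proof
    fix z assume "z \<in> g ` cls x"
    then obtain y where y: "y \<in> M" "d x y \<le> m" "z = g y" using mem_cls[OF x] by blast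
    then show "z \<in> cls (g x)" using mem_cls[OF gM[OF x]] dist[OF y(1)] gM[OF y(1)] by simp
  qed
  show "cls (g x) \<subseteq> g ` cls x"
  proof
    fix z assume "z \<in> cls (g x)"
    then have z: "z \<in> M" "d (g x) z \<le> m" using mem_cls[OF gM[OF x]] by auto
    then obtain y where y: "y \<in> M" "z = g y" using onto by blast
    then have "y \<in> cls x" using mem_cls[OF x] dist[OF y(1)] z(2) by simp
    then show "z \<in> g ` cls x" using y(2) by blast
  qed
qed

lemma automorphism_dmin:
  assumes g: "iso_emb M d M d g" and X: "X \<subseteq> M" and Y: "Y \<subseteq> M"
  shows "dmin d (g ` X) (g ` Y) = dmin d X Y"
proof -
  have dist: "d (g a) (g b) = d a b" if ab: "a \<in> X" "b \<in> Y" for a b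
  proof -
    have "a \<in> M" "b \<in> M" using X Y ab by auto
    then show ?thesis using g by (simp add: iso_emb_def)
  qed
  have "{d a b | a b. a \<in> g ` X \<and> b \<in> g ` Y} = {d a b | a b. a \<in> X \<and> b \<in> Y}"
  proof (rule set_eqI, rule iffI)
    fix u
    assume "u \<in> {d a b | a b. a \<in> g ` X \<and> b \<in> g ` Y}"
    then obtain a b where ab: "a \<in> X" "b \<in> Y" "u = d (g a) (g b)" by blast
    then have "u = d a b" using dist by simp
    then show "u \<in> {d a b | a b. a \<in> X \<and> b \<in> Y}" using ab by blast
  next
    fix u
    assume "u \<in> {d a b | a b. a \<in> X \<and> b \<in> Y}"
    then obtain a b where ab: "a \<in> X" "b \<in> Y" "u = d a b" by blast
    then have "u = d (g a) (g b)" using dist by simp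
    then show "u \<in> {d a b | a b. a \<in> g ` X \<and> b \<in> g ` Y}" using ab by blast
  qed
  then show ?thesis by (simp add: dmin_def)
qed

lemma induced_automorphism:
  assumes g: "bij_betw g M M" "iso_emb M d M d g"
  shows "bij_betw (image g) Q Q" "iso_emb Q (dmin d) Q (dmin d) (image g)"
proof -
  have image_cls: "g ` X \<in> Q" if X: "X \<in> Q" for X
  proof -
    obtain x where "x \<in> M" "X = cls x" using X by (rule quotientE)
    moreover have "g x \<in> M" using bij_betwE[OF g(1)] calculation(1) by blast
    ultimately show ?thesis using automorphism_cls[OF g] cls_in_Q by simp
  qed
  have onto: "Y \<in> image g ` Q" if Y: "Y \<in> Q" for Y
  proof -
    obtain y where y: "y \<in> M" "Y = cls y" using Y by (rule quotientE)
    then obtain x where x: "x \<in> M" "y = g x" using g(1) by (auto simp: bij_betw_def)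
    then have "g ` cls x = Y" using automorphism_cls[OF g x(1)] y by simp
    then show ?thesis using cls_in_Q[OF x(1)] by blast
  qed
  have "inj_on (image g) Q"
  proof (rule inj_onI)
    fix X Y assume XY: "X \<in> Q" "Y \<in> Q" "g ` X = g ` Y"
    have "inj_on g M" using g(1) by (simp add: bij_betw_def)
    then show "X = Y" using XY inj_on_image_eq_iff[OF _ Q_subset[OF XY(1)] Q_subset[OF XY(2)]] by blast
  qed
  then show "bij_betw (image g) Q Q" using image_cls onto by (auto simp: bij_betw_def)
  show "iso_emb Q (dmin d) Q (dmin d) (image g)"
    unfolding iso_emb_def
  proof (intro conjI ballI)
    show "image g ` Q \<subseteq> Q" using image_cls by blast
  next
    fix X Y assume "X \<in> Q" "Y \<in> Q"
    then show "dmin d (g ` X) (g ` Y) = dmin d X Y"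
      using automorphism_dmin[OF g(2) Q_subset[of X] Q_subset[of Y]] by simp
  qed
qed

lemma lift_to_automorphism:
  assumes F: "F \<subseteq> Q" "finite F" and f: "iso_emb F (dmin d) Q (dmin d) f"
  shows "\<exists>g. bij_betw g M M \<and> iso_emb M d M d g \<and> (\<forall>X\<in>F. g ` X = f X)"
proof -
  have fQ: "f X \<in> Q" if "X \<in> F" for X using f that by (auto simp: iso_emb_def)
  have fF: "f ` F \<subseteq> Q" using fQ by blast
  obtain r1 where r1: "\<forall>X\<in>F. r1 X \<in> X" "\<forall>X\<in>F. \<forall>Y\<in>F. d (r1 X) (r1 Y) = dmin d X Y"
    using class_representatives[OF F(2,1)] by (elim exE conjE) (rule that)
  obtain r2 where r2: "\<forall>X\<in>f ` F. r2 X \<in> X" "\<forall>X\<in>f ` F. \<forall>Y\<in>f ` F. d (r2 X) (r2 Y) = dmin d X Y"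
    using class_representatives[OF finite_imageI[OF F(2)] fF] by (elim exE conjE) (rule that)
  have r1M: "r1 X \<in> M" and cls_r1: "cls (r1 X) = X" if X: "X \<in> F" for X
  proof -
    have XQ: "X \<in> Q" using F(1) X by blast
    show "r1 X \<in> M" "cls (r1 X) = X" using Q_subset[OF XQ] cls_of_member[OF XQ] r1(1) X by auto
  qed
  have r2M: "r2 (f X) \<in> M" and cls_r2: "cls (r2 (f X)) = f X" if X: "X \<in> F" for X
    using Q_subset[OF fQ[OF X]] cls_of_member[OF fQ[OF X]] r2(1) X by auto
  define h where "h y = r2 (f (cls y))" for y
  have h: "h (r1 X) = r2 (f X)" if "X \<in> F" for X using cls_r1[OF that] by (simp add: h_def)
  have "iso_emb (r1 ` F) d M d h"
    unfolding iso_emb_def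
  proof (intro conjI ballI)
    show "h ` r1 ` F \<subseteq> M" using h r2M by auto
  next
    fix x y assume "x \<in> r1 ` F" "y \<in> r1 ` F"
    then obtain X Y where XY: "X \<in> F" "Y \<in> F" "x = r1 X" "y = r1 Y" by blast
    have "d (h x) (h y) = d (r2 (f X)) (r2 (f Y))" using XY h by simp
    also have "\<dots> = dmin d (f X) (f Y)" using r2(2) XY by blast
    also have "\<dots> = dmin d X Y" using f XY by (simp add: iso_emb_def)
    also have "\<dots> = d x y" using r1(2) XY by simp
    finally show "d (h x) (h y) = d x y" .
  qed
  moreover have "r1 ` F \<subseteq> M" "finite (r1 ` F)" using r1M F(2) by auto
  ultimately obtain g where g: "bij_betw g M M" "iso_emb M d M d g" "\<forall>x\<in>r1 ` F. g x = h x"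
    using homogeneous[unfolded homogeneous_def, rule_format, of "r1 ` F" h] by blast
  have "g ` X = f X" if X: "X \<in> F" for X
  proof -
    have "g ` X = cls (g (r1 X))" using automorphism_cls[OF g(1,2) r1M[OF X]] cls_r1[OF X] by simp
    also have "\<dots> = f X" using g(3) h[OF X] cls_r2[OF X] X by simp
    finally show ?thesis .
  qed
  then show ?thesis using g(1,2) by blast
qed

text \<open>The quotient is homogeneous: lift, then take images.\<close>
theorem homogeneous_Q: "homogeneous Q (dmin d)"
  unfolding homogeneous_def
proof (intro allI impI, elim conjE)
  fix F f assume "F \<subseteq> Q" "finite F" "iso_emb F (dmin d) Q (dmin d) f"
  then obtain g where g: "bij_betw g M M" "iso_emb M d M d g" "\<forall>X\<in>F. g ` X = f X"
    using lift_to_automorphism by blast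
  then show "\<exists>G. bij_betw G Q Q \<and> iso_emb Q (dmin d) Q (dmin d) G \<and> (\<forall>X\<in>F. G X = f X)"
    using induced_automorphism[OF g(1,2)] by blast
qed

lemma dmin_cls_eq:
  assumes xy: "x \<in> M" "y \<in> M" and dist: "d x y \<in> dist_set Q (dmin d)"
  shows "dmin d (cls x) (cls y) = d x y"
proof -
  obtain A B where AB: "A \<in> Q" "B \<in> Q" "d x y = dmin d A B" using dist by (auto simp: dist_set_def)
  obtain a b where ab: "a \<in> A" "b \<in> B" "d a b = dmin d A B" using dmin_attained(2)[OF AB(1,2)] by blast
  have abM: "a \<in> M" "b \<in> M" using ab Q_subset[OF AB(1)] Q_subset[OF AB(2)] by auto
  obtain g where g: "bij_betw g M M" "iso_emb M d M d g" "g a = x" "g b = y"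
    using two_point_automorphism[OF abM xy] ab(3) AB(3) by auto
  have "cls x = g ` A" "cls y = g ` B"
    using automorphism_cls[OF g(1,2) abM(1)] automorphism_cls[OF g(1,2) abM(2)] g(3,4)
      cls_of_member[OF AB(1) ab(1)] cls_of_member[OF AB(2) ab(2)] by simp_all
  then show ?thesis using automorphism_dmin[OF g(2) Q_subset[OF AB(1)] Q_subset[OF AB(2)]] AB(3) by simp
qed

text \<open>Finite spaces with distances in the distance set of the quotient embed into M, and
  composing with the projection embeds them into the quotient.\<close>
theorem embeds_Q: "embeds_all_finite (dist_set Q (dmin d)) Q (dmin d)"
  unfolding embeds_all_finite_def
proof (intro allI impI, elim conjE)
  fix F :: "nat set" and dF
  assume F: "finite F" "metric_on F dF" "dist_set F dF \<subseteq> dist_set Q (dmin d)"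
  have "dist_set Q (dmin d) \<subseteq> D" using dmin_in_D_nonneg(1) by (auto simp: dist_set_def)
  then obtain \<phi> where \<phi>: "iso_emb F dF M d \<phi>" using embeds F unfolding embeds_all_finite_def by blast
  have "iso_emb F dF Q (dmin d) (\<lambda>i. cls (\<phi> i))"
    unfolding iso_emb_def
  proof (intro conjI ballI)
    show "(\<lambda>i. cls (\<phi> i)) ` F \<subseteq> Q" using \<phi> cls_in_Q by (auto simp: iso_emb_def)
  next
    fix i j assume ij: "i \<in> F" "j \<in> F"
    have M: "\<phi> i \<in> M" "\<phi> j \<in> M" and e: "d (\<phi> i) (\<phi> j) = dF i j"
      using \<phi> ij by (auto simp: iso_emb_def)
    have "dF i j \<in> dist_set F dF" using ij by (auto simp: dist_set_def)
    then have "d (\<phi> i) (\<phi> j) \<in> dist_set Q (dmin d)" using F(3) e by auto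
    then show "dmin d (cls (\<phi> i)) (cls (\<phi> j)) = dF i j" using dmin_cls_eq[OF M] e by simp
  qed
  then show "\<exists>f. iso_emb F dF Q (dmin d) f" by blast
qed

theorem in_U_Q: "in_U (dist_set Q (dmin d)) Q (dmin d)"
  unfolding in_U_def using countable_Q metric_Q homogeneous_Q embeds_Q by simp

section \<open>Copies of the quotient lift to copies of M\<close>

lemma copy_realises_class_type:
  assumes f: "iso_emb Q (dmin d) Q (dmin d) f" and C: "finite C" "C \<subseteq> f ` Q" and P: "P \<in> Q"
  shows "\<exists>W\<in>f ` Q. \<forall>X\<in>C. dmin d W X = dmin d P X"
proof -
  have fQ: "f X \<in> Q" if "X \<in> Q" for X using f that by (auto simp: iso_emb_def)
  have fd: "dmin d (f X) (f Y) = dmin d X Y" if "X \<in> Q" "Y \<in> Q" for X Y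
    using f that by (simp add: iso_emb_def)
  define \<phi> where "\<phi> = inv_into Q f"
  have \<phi>: "\<phi> X \<in> Q" "f (\<phi> X) = X" if "X \<in> f ` Q" for X
    using that by (simp_all add: \<phi>_def inv_into_into f_inv_into_f)
  have CQ: "C \<subseteq> Q" using C(2) fQ by blast
  have "iso_emb C (dmin d) Q (dmin d) \<phi>"
    unfolding iso_emb_def
  proof (intro conjI ballI)
    show "\<phi> ` C \<subseteq> Q" using \<phi>(1) C(2) by blast
  next
    fix X Y assume "X \<in> C" "Y \<in> C"
    then have XY: "X \<in> f ` Q" "Y \<in> f ` Q" using C(2) by auto
    have "dmin d (\<phi> X) (\<phi> Y) = dmin d (f (\<phi> X)) (f (\<phi> Y))" using fd \<phi>(1) XY by simp
    then show "dmin d (\<phi> X) (\<phi> Y) = dmin d X Y" using \<phi>(2) XY by simp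
  qed
  then obtain H where H: "bij_betw H Q Q" "iso_emb Q (dmin d) Q (dmin d) H" "\<forall>X\<in>C. H X = \<phi> X"
    using homogeneous_Q[unfolded homogeneous_def, rule_format, of C \<phi>] CQ C(1) by blast
  have HP: "H P \<in> Q" using bij_betwE[OF H(1)] P by blast
  have "\<forall>X\<in>C. dmin d (f (H P)) X = dmin d P X"
  proof
    fix X assume X: "X \<in> C"
    have X': "X \<in> f ` Q" "X \<in> Q" using X C(2) CQ by auto
    have "dmin d (f (H P)) X = dmin d (f (H P)) (f (\<phi> X))" using \<phi>(2)[OF X'(1)] by simp
    also have "\<dots> = dmin d (H P) (H X)" using fd[OF HP \<phi>(1)[OF X'(1)]] H(3) X by simp
    also have "\<dots> = dmin d P X" using H(2) P X'(2) by (simp add: iso_emb_def)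
    finally show "dmin d (f (H P)) X = dmin d P X" .
  qed
  moreover have "f (H P) \<in> f ` Q" using HP by blast
  ultimately show ?thesis by blast
qed

theorem copy_union_extension_property:
  assumes f: "iso_emb Q (dmin d) Q (dmin d) f"
  shows "extension_property D (\<Union>(f ` Q)) d"
  unfolding extension_property_def
proof (intro allI impI, elim conjE)
  fix F t assume F: "finite F" "F \<subseteq> \<Union>(f ` Q)" and t: "admissible D d F t"
  have fQ: "f X \<in> Q" if "X \<in> Q" for X using f that by (auto simp: iso_emb_def)
  have NM: "\<Union>(f ` Q) \<subseteq> M" using Q_subset[OF fQ] by blast
  have FM: "F \<subseteq> M" using F(2) NM by blast
  obtain p where p: "p \<in> M" "p \<notin> F" "\<forall>x\<in>F. d p x = t x"
    using extension_propertyD[OF extension_property F(1) FM t] by blast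
  show "\<exists>q\<in>\<Union>(f ` Q). q \<notin> F \<and> (\<forall>x\<in>F. d q x = t x)"
  proof (cases "cls p \<in> f ` Q")
    case True
    then have "p \<in> \<Union>(f ` Q)" using self_in_cls[OF p(1)] by blast
    then show ?thesis using p(2,3) by blast
  next
    case False
    have clsF: "cls x \<in> f ` Q" if x: "x \<in> F" for x
    proof -
      obtain Y where Y: "Y \<in> Q" "x \<in> f Y" using F(2) x by blast
      then show ?thesis using cls_of_member[OF fQ[OF Y(1)] Y(2)] by simp
    qed
    have C: "finite (cls ` F)" "cls ` F \<subseteq> f ` Q" using F(1) clsF by auto
    obtain W where W: "W \<in> f ` Q" "\<forall>X\<in>cls ` F. dmin d W X = dmin d (cls p) X"
      using copy_realises_class_type[OF f C cls_in_Q[OF p(1)]] by blast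
    have WQ: "W \<in> Q" using W(1) fQ by blast
    have window: "m < dmin d W (cls x) \<and> dmin d W (cls x) \<le> t x \<and> t x \<le> dmin d W (cls x) + m"
      if x: "x \<in> F" for x
    proof -
      have xM: "x \<in> M" using FM x by blast
      have "cls p \<noteq> cls x" using False clsF[OF x] by auto
      then have "m < dmin d (cls p) (cls x)" by (rule dmin_distinct[OF cls_in_Q[OF p(1)] cls_in_Q[OF xM]])
      moreover have "dmin d (cls p) (cls x) \<le> d p x" "d p x \<le> dmin d (cls p) (cls x) + m"
        using dmin_bounds[OF cls_in_Q[OF p(1)] cls_in_Q[OF xM] self_in_cls[OF p(1)] self_in_cls[OF xM]] .
      ultimately show ?thesis using W(2) x p(3) by simp
    qed
    obtain q where "q \<in> W" "q \<notin> F" "\<forall>x\<in>F. d q x = t x"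
      using realise_in_class[OF WQ F(1) FM t window] by blast
    then show ?thesis using W(1) by blast
  qed
qed

theorem copy_lifts:
  assumes f: "iso_emb Q (dmin d) Q (dmin d) f"
  shows "\<exists>g. iso_emb M d M d g \<and> g ` M = \<Union>(f ` Q)"
proof -
  let ?S = "\<Union>(f ` Q)"
  have fQ: "f X \<in> Q" if "X \<in> Q" for X using f that by (auto simp: iso_emb_def)
  have SM: "?S \<subseteq> M" using Q_subset[OF fQ] by blast
  obtain x where "x \<in> M" using nonempty by blast
  then have "f (cls x) \<in> Q" using fQ cls_in_Q by blast
  then obtain y where "y \<in> f (cls x)" using Q_nonempty by blast
  then have "?S \<noteq> {}" using cls_in_Q[OF \<open>x \<in> M\<close>] by blast
  moreover have "countable ?S" using countable_subset[OF SM countable] .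
  moreover have "dist_set ?S d \<subseteq> D" using dist_set_mono[OF SM, of d] dist_set_eq by simp
  ultimately interpret back_forth_pair D M ?S d
    using countable nonempty metric metric_on_subset[OF metric SM] dist_set_eq
      extension_property copy_union_extension_property[OF f]
    by unfold_locales simp_all
  obtain g where g: "iso_emb M d ?S d g" "g ` M = ?S" using isometric by blast
  then have "iso_emb M d M d g" using SM by (auto simp: iso_emb_def)
  then show ?thesis using g(2) by blast
qed

end

theorem lemma9p3:
  fixes D :: "real set" and M :: "'a set" and d :: "'a \<Rightarrow> 'a \<Rightarrow> real"
    and B :: "real set" and m :: real
  assumes "finite D" and "0 \<in> D" and "\<forall>r\<in>D. r \<ge> 0"
    and "universal_dist D"
    and "\<exists>B1 B2. B1 \<in> blocks D \<and> B2 \<in> blocks D \<and> B1 \<noteq> B2"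
    and "B \<in> blocks D" and "Min (D - {0}) \<in> B"
    and "m = Max B"
    and "in_U D M d"
  shows "universal_dist (dist_set (M // close_rel M d m) (dmin d))
         \<and> in_U (dist_set (M // close_rel M d m) (dmin d)) (M // close_rel M d m) (dmin d)
         \<and> (\<forall>N. (\<exists>f. iso_emb (M // close_rel M d m) (dmin d) (M // close_rel M d m) (dmin d) f
                     \<and> N = f ` (M // close_rel M d m))
               \<longrightarrow> (\<exists>g. iso_emb M d M d g \<and> g ` M = \<Union>N))"
proof -
  interpret U_space D M d using assms(9,1,2) by unfold_locales
  have B: "B \<noteq> {}" "B \<subseteq> D - {0}" using assms(6) by (auto simp: blocks_def pre_block_def)
  have "m \<in> B" using Max_in[OF finite_subset[OF _ assms(1)] B(1)] B(2) assms(8) by blast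
  then have m: "m \<in> D" "m > 0" using B(2) assms(3) by force+
  interpret U_quotient D M d m
    using m block_gap[OF assms(6)] assms(8) by unfold_locales auto
  have copies: "\<exists>g. iso_emb M d M d g \<and> g ` M = \<Union>N"
    if "\<exists>f. iso_emb Q (dmin d) Q (dmin d) f \<and> N = f ` Q" for N
    using that copy_lifts by blast
  show ?thesis using in_U_Q universal_dist_of_in_U[OF in_U_Q] copies by blast
qed

end
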